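(* Let $n\ge3$ be odd. Then $h(n)=\frac{1}{2n}\cot\frac{\pi}{2n}$, and moreover $h(n)=\operatorname{Im}\lambda_{(n-1)/2}(n)$, where $\lambda_k(n)=\frac1n\big(k-\sum_{j=1}^k e^{-2\pi\mathrm i j/n}\big)$.
   Context: A standardized Laplacian matrix of order $n$ is a real $n\times n$ matrix whose row sums are all $0$ and whose off-diagonal entries are nonpositive with absolute value at most $1/n$. $h(n)$ is the supremum of $\operatorname{Im}\lambda$ over all eigenvalues $\lambda$ of all standardized Laplacian matrices of order $n$. *)

theory Defs
  imports Complex_Main "Jordan_Normal_Form.Char_Poly"
begin

definition std_laplacian :: "nat \<Rightarrow> real mat \<Rightarrow> bool" where
  "std_laplacian n A \<longleftrightarrow> A \<in> carrier_mat n n \<and>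
     (\<forall>i<n. (\<Sum>j<n. A $$ (i, j)) = 0) \<and>
     (\<forall>i<n. \<forall>j<n. i \<noteq> j \<longrightarrow> A $$ (i, j) \<le> 0 \<and> \<bar>A $$ (i, j)\<bar> \<le> 1 / real n)"

definition h :: "nat \<Rightarrow> real" where
  "h n = Sup {Im ev | ev A. std_laplacian n A \<and> eigenvalue (map_mat complex_of_real A) ev}"

definition lam :: "nat \<Rightarrow> nat \<Rightarrow> complex" where
  "lam n k = (1 / of_nat n) * (of_nat k - (\<Sum>j=1..k. exp (- 2 * pi * \<i> * of_nat j / of_nat n)))"

end

theory Submission
  imports Defs
begin

(*
  Let A x = ev x with x a nonzero complex eigenvector.  Writing
  I i j = Im (cnj (x i) * x j), one has Im ev * |x|^2 = sum_{i,j} A i j * I i j; as I is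
  antisymmetric and the off-diagonal entries of A lie in [-1/n, 0], this is at most
  (1/(2n)) * sum_{i,j} |I i j|.  The heart of the proof is the inequality
      sum_{i,j} |Im (cnj (x i) * x j)| <= cot (pi/(2n)) * |x|^2 :
  after flipping signs and reordering the x i by argument, |I i j| = sgn (j - i) * I i j,
  i.e. the left side is twice a Hermitian form with the "sign matrix" sgn (j - i) / (2i).
  That matrix is diagonalised by the twisted Fourier modes cis (pi (2m+1) l / n), with
  eigenvalues cot (pi (2m+1)/(2n)) / 2, the largest being cot (pi/(2n)) / 2.

  Attainment.  lam n k is the eigenvalue of the circulant standardized Laplacian whose
  rows carry k/n on the diagonal and -1/n on the next k cyclic positions; its imaginary
  part is a sum of sines that telescopes to the value above when n = 2k+1.
*)

section \<open>Trigonometric facts\<close>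

lemma cot_antimono:
  assumes "0 < a" "a \<le> b" "b < pi"
  shows "cot b \<le> cot a"
proof -
  have sa: "sin a > 0" using assms by (intro sin_gt_zero) auto
  have sb: "sin b > 0" using assms by (intro sin_gt_zero) auto
  have "sin (b - a) \<ge> 0" using assms by (intro sin_ge_zero) auto
  then have "cos b * sin a \<le> cos a * sin b" by (simp add: sin_diff algebra_simps)
  then show ?thesis using sa sb by (simp add: cot_def divide_simps mult.commute)
qed

text \<open>For rho = cis (2t), the Moebius expression -(rho+1)/((rho-1) 2i) is the real number
  cot t / 2; this produces the eigenvalues of the sign matrix.\<close>
lemma cis_double_ratio:
  assumes "sin t \<noteq> 0"
  shows "- (cis (2*t) + 1) / (cis (2*t) - 1) / (2 * \<i>) = complex_of_real (cot t / 2)"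
proof -
  have c2: "cos (2*t) = 2*(cos t)^2 - 1" by (simp add: cos_double_cos)
  have s2: "sin (2*t) = 2*sin t*cos t" by (rule sin_double)
  have plus: "cis (2*t) + 1 = cis t * complex_of_real (2 * cos t)"
    unfolding complex_eq_iff by (simp add: c2 s2 power2_eq_square)
  have sq: "cos t * cos t = 1 - sin t * sin t"
    by (metis add_diff_cancel_right' sin_cos_squared_add3)
  have minus: "cis (2*t) - 1 = cis t * (\<i> * complex_of_real (2 * sin t))"
    unfolding complex_eq_iff
    by (simp add: c2 s2 power2_eq_square) (simp add: sq algebra_simps)
  have "cis t \<noteq> 0" by (metis cis_neq_zero)
  then show ?thesis using assms unfolding plus minus cot_def
    by (simp add: field_simps complex_eq_iff)
qed

lemma sin_sum_telescope:
  "2 * sin (x/2) * (\<Sum>j=1..k. sin (real j * x)) = cos (x/2) - cos ((2 * real k + 1) * x / 2)"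
proof (induction k)
  case 0
  then show ?case by simp
next
  case (Suc k)
  have step: "2 * sin (x/2) * sin (real (Suc k) * x)
      = cos ((2 * real k + 1) * x / 2) - cos ((2 * real (Suc k) + 1) * x / 2)"
  proof -
    have "cos ((2 * real k + 1) * x / 2) - cos ((2 * real (Suc k) + 1) * x / 2)
       = 2 * sin (((2 * real k + 1) * x / 2 + (2 * real (Suc k) + 1) * x / 2) / 2)
           * sin (((2 * real (Suc k) + 1) * x / 2 - (2 * real k + 1) * x / 2) / 2)"
      by (rule cos_diff_cos)
    also have "((2 * real k + 1) * x / 2 + (2 * real (Suc k) + 1) * x / 2) / 2 = real (Suc k) * x"
      by (simp add: field_simps)
    also have "((2 * real (Suc k) + 1) * x / 2 - (2 * real k + 1) * x / 2) / 2 = x / 2"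
      by (simp add: field_simps)
    finally show ?thesis by simp
  qed
  show ?case using Suc.IH step by (simp add: distrib_left)
qed

lemma sin_sum_half_period:
  assumes n: "n = 2 * k + 1"
  shows "(\<Sum>j=1..k. sin (real j * (2 * pi / real n))) = cot (pi / (2 * real n)) / 2"
proof (cases "k = 0")
  case True
  then show ?thesis using n by (simp add: cot_def)
next
  case False
  define x where "x = 2 * pi / real n"
  define t where "t = pi / (2 * real n)"
  have n0: "real n > 0" using n by simp
  have half_x: "x / 2 = 2 * t" unfolding x_def t_def using n0 by (simp add: field_simps)
  have "(2 * real k + 1) * x / 2 = pi" unfolding x_def using n n0 by (simp add: field_simps)
  then have "2 * sin (x/2) * (\<Sum>j=1..k. sin (real j * x)) = cos (x/2) + 1"
    using sin_sum_telescope[of x k] by simp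
  then have "2 * (2 * sin t * cos t) * (\<Sum>j=1..k. sin (real j * x)) = 2 * cos t ^ 2"
    unfolding half_x sin_double cos_double_cos by simp
  moreover have "0 < t" "t < pi / 2"
    unfolding t_def using n n0 False by (auto simp: field_simps)
  then have "sin t > 0" "cos t > 0" by (auto intro: sin_gt_zero cos_gt_zero)
  ultimately have "(\<Sum>j=1..k. sin (real j * x)) = cos t / (2 * sin t)"
    by (simp add: field_simps power2_eq_square)
  then show ?thesis unfolding x_def t_def cot_def by simp
qed

section \<open>The sign matrix and its spectrum\<close>

definition sign_matrix :: "nat \<Rightarrow> nat \<Rightarrow> complex" where
  "sign_matrix k l = (if k < l then 1 else if l < k then -1 else 0) / (2 * \<i>)"

text \<open>The twisted (anti-periodic) Fourier modes: the m-th mode of length n is the geometric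
  sequence in cis (pi (2m+1) / n), an n-th root of -1.\<close>
definition twisted_mode :: "nat \<Rightarrow> nat \<Rightarrow> nat \<Rightarrow> complex" where
  "twisted_mode n m k = cis (pi * real (2*m+1) * real k / real n)"

definition sign_eigenvalue :: "nat \<Rightarrow> nat \<Rightarrow> real" where
  "sign_eigenvalue n m = cot (pi * real (2*m+1) / (2 * real n)) / 2"

lemma twisted_mode_pow:
  assumes "n > 0"
  shows "twisted_mode n m l = twisted_mode n m 1 ^ l"
  unfolding twisted_mode_def DeMoivre using assms by (simp add: field_simps)

lemma twisted_mode_orthogonal:
  assumes n: "n > 0" and k: "k < n" and l: "l < n"
  shows "(\<Sum>m<n. cnj (twisted_mode n m l) * twisted_mode n m k) = (if k = l then of_nat n else 0)"
proof (cases "k = l")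
  case True
  then show ?thesis by (simp add: twisted_mode_def cis_cnj cis_mult)
next
  case False
  define d where "d = real k - real l"
  have d0: "d \<noteq> 0" using False by (simp add: d_def)
  have d_less: "\<bar>d\<bar> < real n" using k l by (auto simp: d_def)
  define q where "q = cis (2 * pi * d / real n)"
  have mode_product: "cnj (twisted_mode n m l) * twisted_mode n m k = cis (pi * d / real n) * q ^ m" for m
    unfolding twisted_mode_def q_def d_def using n
    by (simp add: cis_cnj cis_mult DeMoivre field_simps)
  have qn: "q ^ n = 1"
  proof -
    have "q ^ n = cis (2 * pi * d)" using n by (simp add: q_def DeMoivre field_simps)
    moreover have "d \<in> \<int>" unfolding d_def by simp
    ultimately show ?thesis by simp
  qed
  have q1: "q \<noteq> 1"
  proof
    assume "q = 1"
    then have "cos (2 * pi * d / real n) = 1"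
      by (metis cis.simps(1) one_complex.simps(1) q_def)
    then obtain j :: int where "2 * pi * d / real n = real_of_int j * 2 * pi"
      using cos_one_2pi_int by auto
    then have dj: "d = real_of_int j * real n" using n by (simp add: field_simps)
    then have "1 \<le> \<bar>real_of_int j\<bar>" using d0 by auto
    then have "real n \<le> \<bar>real_of_int j\<bar> * real n" using n by simp
    also have "\<dots> = \<bar>d\<bar>" using dj by (simp add: abs_mult)
    finally show False using d_less by simp
  qed
  have "(\<Sum>m<n. cnj (twisted_mode n m l) * twisted_mode n m k)
      = cis (pi * d / real n) * (\<Sum>m<n. q ^ m)"
    by (simp add: mode_product sum_distrib_left)
  also have "(\<Sum>m<n. q ^ m) = 0" using geometric_sum[OF q1, of n] qn by simp
  finally show ?thesis using False by simp
qed

lemma sum_sign_split: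
  fixes x :: "nat \<Rightarrow> 'a::ring_1"
  assumes "k < n"
  shows "(\<Sum>l<n. (if k < l then 1 else if l < k then -1 else 0) * x l)
       = (\<Sum>l<n. x l) - (\<Sum>l<Suc k. x l) - (\<Sum>l<k. x l)"
proof -
  have "(if k < l then 1 else if l < k then -1 else 0) * x l
      = x l - (if l < Suc k then x l else 0) - (if l < k then x l else 0)" for l
    by auto
  moreover have "{..<n} \<inter> {l. l < Suc k} = {..<Suc k}" "{..<n} \<inter> {l. l < k} = {..<k}"
    using assms by auto
  ultimately show ?thesis by (simp add: sum_subtractf sum.If_cases)
qed

lemma sign_matrix_eigen:
  assumes n: "n > 0" and m: "m < n" and k: "k < n"
  shows "(\<Sum>l<n. sign_matrix k l * twisted_mode n m l)
       = complex_of_real (sign_eigenvalue n m) * twisted_mode n m k"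
proof -
  define \<rho> where "\<rho> = twisted_mode n m 1"
  define t where "t = pi * real (2*m+1) / (2 * real n)"
  have mode: "twisted_mode n m l = \<rho> ^ l" for l unfolding \<rho>_def by (rule twisted_mode_pow[OF n])
  have rho: "\<rho> = cis (2*t)" unfolding \<rho>_def twisted_mode_def t_def using n
    by (intro arg_cong[where f=cis]) (simp add: field_simps)
  have rho_n: "\<rho> ^ n = -1"
  proof -
    have "real n * (2*t) = 2 * pi * real m + pi" unfolding t_def using n by (simp add: field_simps)
    then have "\<rho> ^ n = cis (2 * pi * real m + pi)" unfolding rho DeMoivre by simp
    also have "\<dots> = -1" by (simp add: cis_mult[symmetric])
    finally show ?thesis .
  qed
  have rho1: "\<rho> \<noteq> 1" using rho_n by (metis one_neq_neg_one power_one)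
  have "0 < t" unfolding t_def using n by simp
  moreover have "t < pi"
  proof -
    have "real (2*m+1) < 2 * real n" using m by linarith
    then have "pi * real (2*m+1) < pi * (2 * real n)" by simp
    then show ?thesis unfolding t_def using n by (simp add: field_simps)
  qed
  ultimately have sin_t: "sin t \<noteq> 0" using sin_gt_zero by force
  have "(\<Sum>l<n. sign_matrix k l * twisted_mode n m l)
      = (\<Sum>l<n. (if k < l then 1 else if l < k then -1 else 0) * \<rho> ^ l) / (2 * \<i>)"
    by (simp only: sign_matrix_def mode times_divide_eq_left sum_divide_distrib)
  also have "(\<Sum>l<n. (if k < l then 1 else if l < k then -1 else 0) * \<rho> ^ l)
      = (\<rho>^n - 1)/(\<rho> - 1) - (\<rho>^Suc k - 1)/(\<rho> - 1) - (\<rho>^k - 1)/(\<rho> - 1)"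
    by (simp only: sum_sign_split[OF k] geometric_sum[OF rho1])
  also have "\<dots> = ((\<rho>^n - 1) - (\<rho>^Suc k - 1) - (\<rho>^k - 1)) / (\<rho> - 1)"
    by (simp only: diff_divide_distrib)
  also have "(\<rho>^n - 1) - (\<rho>^Suc k - 1) - (\<rho>^k - 1) = \<rho> ^ k * (- (\<rho> + 1))"
    using rho_n by (simp add: algebra_simps)
  finally have "(\<Sum>l<n. sign_matrix k l * twisted_mode n m l)
      = \<rho> ^ k * (- (\<rho> + 1) / (\<rho> - 1) / (2 * \<i>))"
    by simp
  also have "- (\<rho> + 1) / (\<rho> - 1) / (2 * \<i>) = complex_of_real (cot t / 2)"
    unfolding rho by (rule cis_double_ratio[OF sin_t])
  finally show ?thesis unfolding t_def sign_eigenvalue_def using mode[of k] by simp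
qed

lemma sign_eigenvalue_le:
  assumes "m < n"
  shows "sign_eigenvalue n m \<le> cot (pi / (2 * real n)) / 2"
proof -
  have n: "real n > 0" using assms by simp
  have "cot (pi * real (2*m+1) / (2 * real n)) \<le> cot (pi / (2 * real n))"
  proof (rule cot_antimono)
    show "0 < pi / (2 * real n)" using n by simp
    show "pi / (2 * real n) \<le> pi * real (2*m+1) / (2 * real n)"
      using n by (intro divide_right_mono) auto
    have "real (2*m+1) < 2 * real n" using assms by linarith
    then have "pi * real (2*m+1) < pi * (2 * real n)" by simp
    then show "pi * real (2*m+1) / (2 * real n) < pi" using n by (simp add: field_simps)
  qed
  then show ?thesis unfolding sign_eigenvalue_def by simp
qed

definition twisted_coeff :: "nat \<Rightarrow> (nat \<Rightarrow> complex) \<Rightarrow> nat \<Rightarrow> complex" where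
  "twisted_coeff n w m = (\<Sum>l<n. cnj (twisted_mode n m l) * w l)"

lemma twisted_inversion:
  assumes n: "n > 0" and k: "k < n"
  shows "w k = (\<Sum>m<n. twisted_coeff n w m * twisted_mode n m k) / of_nat n"
proof -
  have "(\<Sum>m<n. twisted_coeff n w m * twisted_mode n m k)
      = (\<Sum>l<n. w l * (\<Sum>m<n. cnj (twisted_mode n m l) * twisted_mode n m k))"
    unfolding twisted_coeff_def sum_distrib_right sum_distrib_left
    by (subst sum.swap) (simp add: algebra_simps)
  also have "\<dots> = (\<Sum>l<n. if l = k then w l * of_nat n else 0)"
    by (intro sum.cong refl) (simp add: twisted_mode_orthogonal[OF n k])
  also have "\<dots> = w k * of_nat n" using k by simp
  finally show ?thesis using n by simp
qed

lemma twisted_pairing: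
  "(\<Sum>i<n. cnj (w i) * (\<Sum>m<n. a m * twisted_mode n m i))
     = (\<Sum>m<n. a m * cnj (twisted_coeff n w m))"
  unfolding twisted_coeff_def cnj_sum sum_distrib_left
  by (subst sum.swap) (simp add: algebra_simps)

lemma twisted_parseval:
  assumes n: "n > 0"
  shows "(\<Sum>i<n. (cmod (w i))^2) = (\<Sum>m<n. (cmod (twisted_coeff n w m))^2) / real n"
proof -
  have "complex_of_real (\<Sum>i<n. (cmod (w i))^2) = (\<Sum>i<n. cnj (w i) * w i)"
    by (simp only: of_real_sum complex_norm_square mult.commute)
  also have "\<dots> = (\<Sum>i<n. cnj (w i) * (\<Sum>m<n. twisted_coeff n w m * twisted_mode n m i))
                    / of_nat n"
    unfolding sum_divide_distrib
    by (intro sum.cong refl) (metis twisted_inversion[OF n] lessThan_iff times_divide_eq_right)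
  also have "\<dots> = complex_of_real ((\<Sum>m<n. (cmod (twisted_coeff n w m))^2) / real n)"
    unfolding twisted_pairing
    by (simp only: of_real_divide of_real_sum of_real_of_nat_eq complex_norm_square)
  finally show ?thesis using of_real_eq_iff by blast
qed

lemma sign_form_diagonal:
  assumes n: "n > 0"
  shows "(\<Sum>i<n. \<Sum>j<n. cnj (w i) * sign_matrix i j * w j)
       = complex_of_real ((\<Sum>m<n. sign_eigenvalue n m * (cmod (twisted_coeff n w m))^2) / real n)"
proof -
  define c where "c = twisted_coeff n w"
  have row: "(\<Sum>j<n. sign_matrix i j * w j)
      = (\<Sum>m<n. c m * of_real (sign_eigenvalue n m) * twisted_mode n m i) / of_nat n"
    if i: "i < n" for i
  proof -
    have "(\<Sum>j<n. sign_matrix i j * w j)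
        = (\<Sum>j<n. sign_matrix i j * ((\<Sum>m<n. c m * twisted_mode n m j) / of_nat n))"
      unfolding c_def by (intro sum.cong refl) (metis twisted_inversion[OF n] lessThan_iff)
    also have "\<dots> = (\<Sum>m<n. c m * (\<Sum>j<n. sign_matrix i j * twisted_mode n m j)) / of_nat n"
      unfolding sum_divide_distrib sum_distrib_left
      by (subst sum.swap) (simp add: algebra_simps)
    also have "\<dots> = (\<Sum>m<n. c m * of_real (sign_eigenvalue n m) * twisted_mode n m i) / of_nat n"
      by (simp add: sign_matrix_eigen[OF n _ i] mult.assoc)
    finally show ?thesis .
  qed
  have "(\<Sum>i<n. \<Sum>j<n. cnj (w i) * sign_matrix i j * w j)
      = (\<Sum>i<n. cnj (w i) * (\<Sum>m<n. c m * of_real (sign_eigenvalue n m) * twisted_mode n m i))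
          / of_nat n"
    unfolding sum_divide_distrib
    by (intro sum.cong refl) (simp add: sum_distrib_left[symmetric] mult.assoc row)
  also have "\<dots> = (\<Sum>m<n. of_real (sign_eigenvalue n m * (cmod (c m))^2)) / of_nat n"
    unfolding twisted_pairing c_def
    by (simp only: of_real_mult complex_norm_square mult_ac)
  finally show ?thesis by (simp add: c_def)
qed

lemma sign_form_bound:
  assumes n: "n > 0"
  shows "Re (\<Sum>i<n. \<Sum>j<n. cnj (w i) * sign_matrix i j * w j)
         \<le> cot (pi / (2 * real n)) / 2 * (\<Sum>i<n. (cmod (w i))^2)"
proof -
  define c where "c = twisted_coeff n w"
  have "Re (\<Sum>i<n. \<Sum>j<n. cnj (w i) * sign_matrix i j * w j)
      = (\<Sum>m<n. sign_eigenvalue n m * (cmod (c m))^2) / real n"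
    unfolding sign_form_diagonal[OF n] c_def by (simp only: Re_complex_of_real)
  also have "\<dots> \<le> (\<Sum>m<n. cot (pi / (2 * real n)) / 2 * (cmod (c m))^2) / real n"
    by (intro divide_right_mono sum_mono mult_right_mono sign_eigenvalue_le) auto
  also have "\<dots> = cot (pi / (2 * real n)) / 2 * (\<Sum>i<n. (cmod (w i))^2)"
    using twisted_parseval[OF n, of w] by (simp add: c_def sum_distrib_left)
  finally show ?thesis .
qed

section \<open>The key inequality for sums of oriented areas\<close>

lemma Im_cnj_mult_Arg:
  "Im (cnj a * b) = cmod a * cmod b * sin (Arg b - Arg a)"
proof (cases "a = 0 \<or> b = 0")
  case True
  then show ?thesis by auto
next
  case False
  then have a: "a \<noteq> 0" and b: "b \<noteq> 0" by auto
  have "Im (cnj a * b) = cmod a * cmod b * (cos (Arg a) * sin (Arg b) - sin (Arg a) * cos (Arg b))"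
    using a b by (simp add: cos_Arg sin_Arg field_simps)
  also have "\<dots> = cmod a * cmod b * sin (Arg b - Arg a)" by (simp add: sin_diff)
  finally show ?thesis .
qed

lemma Arg_upper_half_plane:
  assumes "0 \<le> Im z" "\<not> (Im z = 0 \<and> Re z < 0)"
  shows "0 \<le> Arg z \<and> Arg z < pi"
proof (cases "z = 0")
  case True
  then show ?thesis by (simp add: Arg_zero)
next
  case False
  have bounds: "- pi < Arg z" "Arg z \<le> pi" using Arg_bounded by auto
  have "0 \<le> Arg z"
  proof (rule ccontr)
    assume "\<not> 0 \<le> Arg z"
    then have "sin (- Arg z) > 0" using bounds by (intro sin_gt_zero) auto
    then show False using False assms by (auto simp: sin_Arg divide_less_0_iff)
  qed
  moreover have "Arg z \<noteq> pi"
  proof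
    assume pi: "Arg z = pi"
    then have "Re z / cmod z = -1" "Im z / cmod z = 0"
      using cos_Arg[OF False] sin_Arg[OF False] by simp_all
    then show False using False assms by (simp add: divide_eq_eq)
  qed
  ultimately show ?thesis using bounds by auto
qed

lemma reorder_by_Arg:
  fixes u :: "nat \<Rightarrow> complex"
  assumes arg: "\<And>i. 0 \<le> Arg (u i) \<and> Arg (u i) < pi"
  obtains \<sigma> where "bij_betw \<sigma> {..<n} {..<n}"
    and "\<And>i j. i \<le> j \<Longrightarrow> j < n \<Longrightarrow> 0 \<le> Im (cnj (u (\<sigma> i)) * u (\<sigma> j))"
proof
  define xs where "xs = sort_key (\<lambda>i. Arg (u i)) [0..<n]"
  have len: "length xs = n" unfolding xs_def by simp
  have "bij_betw ((!) xs) {..<length xs} (set xs)"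
    by (rule bij_betw_nth) (auto simp: xs_def)
  moreover have "set xs = {..<n}" unfolding xs_def by auto
  ultimately show "bij_betw ((!) xs) {..<n} {..<n}" using len by simp
  fix i j assume ij: "i \<le> j" "j < n"
  have "sorted (map (\<lambda>i. Arg (u i)) xs)" unfolding xs_def by simp
  then have "Arg (u (xs ! i)) \<le> Arg (u (xs ! j))"
    using ij len sorted_nth_mono by fastforce
  then have "sin (Arg (u (xs ! j)) - Arg (u (xs ! i))) \<ge> 0"
    using arg[of "xs ! i"] arg[of "xs ! j"] by (intro sin_ge_zero) auto
  then show "0 \<le> Im (cnj (u (xs ! i)) * u (xs ! j))"
    unfolding Im_cnj_mult_Arg by simp
qed

lemma Re_sign_matrix:
  "2 * Re (a * sign_matrix i j * b) = (if i < j then 1 else if j < i then -1 else 0) * Im (a * b)"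
  unfolding sign_matrix_def by (simp add: Re_divide Im_divide field_simps)

lemma abs_Im_sum_eq_sign_form:
  assumes ordered: "\<And>i j. i \<le> j \<Longrightarrow> j < n \<Longrightarrow> 0 \<le> Im (cnj (w i) * w j)"
  shows "(\<Sum>i<n. \<Sum>j<n. \<bar>Im (cnj (w i) * w j)\<bar>)
       = 2 * Re (\<Sum>i<n. \<Sum>j<n. cnj (w i) * sign_matrix i j * w j)"
proof -
  have "\<bar>Im (cnj (w i) * w j)\<bar> = 2 * Re (cnj (w i) * sign_matrix i j * w j)"
    if "i < n" "j < n" for i j
  proof -
    consider "i < j" | "j < i" | "i = j" by linarith
    then show ?thesis
    proof cases
      case 1
      then show ?thesis unfolding Re_sign_matrix using ordered[of i j] that by simp
    next
      case 2
      have "Im (cnj (w i) * w j) = - Im (cnj (w j) * w i)" by simp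
      then have "Im (cnj (w i) * w j) \<le> 0" using ordered[of j i] that 2 by linarith
      then show ?thesis unfolding Re_sign_matrix using 2 by simp
    next
      case 3
      then show ?thesis unfolding Re_sign_matrix by simp
    qed
  qed
  then show ?thesis by (simp add: Re_sum sum_distrib_left)
qed

lemma sum_abs_Im_le:
  fixes v :: "nat \<Rightarrow> complex"
  assumes n: "n > 0"
  shows "(\<Sum>i<n. \<Sum>j<n. \<bar>Im (cnj (v i) * v j)\<bar>) \<le> cot (pi / (2 * real n)) * (\<Sum>i<n. (cmod (v i))^2)"
proof -
  define u where
    "u i = (if 0 < Im (v i) \<or> (Im (v i) = 0 \<and> 0 \<le> Re (v i)) then v i else - v i)" for i
  have u_sign: "u i = v i \<or> u i = - v i" for i by (simp add: u_def)
  have u_abs: "\<bar>Im (cnj (u i) * u j)\<bar> = \<bar>Im (cnj (v i) * v j)\<bar>" for i j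
    using u_sign[of i] u_sign[of j] by (elim disjE) simp_all
  have u_norm: "cmod (u i) = cmod (v i)" for i
    using u_sign[of i] by auto
  have "0 \<le> Arg (u i) \<and> Arg (u i) < pi" for i
    by (rule Arg_upper_half_plane) (auto simp: u_def)
  then obtain \<sigma> where \<sigma>: "bij_betw \<sigma> {..<n} {..<n}"
    and ordered: "\<And>i j. i \<le> j \<Longrightarrow> j < n \<Longrightarrow> 0 \<le> Im (cnj (u (\<sigma> i)) * u (\<sigma> j))"
    using reorder_by_Arg by metis
  define w where "w i = u (\<sigma> i)" for i
  have "(\<Sum>i<n. \<Sum>j<n. \<bar>Im (cnj (v i) * v j)\<bar>) = (\<Sum>i<n. \<Sum>j<n. \<bar>Im (cnj (u i) * u j)\<bar>)"
    by (simp only: u_abs)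
  also have "\<dots> = (\<Sum>i<n. \<Sum>j<n. \<bar>Im (cnj (w i) * w j)\<bar>)"
  proof -
    have "(\<Sum>i<n. \<Sum>j<n. \<bar>Im (cnj (w i) * w j)\<bar>)
        = (\<Sum>i<n. \<Sum>j<n. \<bar>Im (cnj (u (\<sigma> i)) * u j)\<bar>)"
      unfolding w_def by (intro sum.cong refl sum.reindex_bij_betw[OF \<sigma>])
    also have "\<dots> = (\<Sum>i<n. \<Sum>j<n. \<bar>Im (cnj (u i) * u j)\<bar>)"
      by (rule sum.reindex_bij_betw[OF \<sigma>, where g = "\<lambda>i. \<Sum>j<n. \<bar>Im (cnj (u i) * u j)\<bar>"])
    finally show ?thesis by simp
  qed
  also have "\<dots> = 2 * Re (\<Sum>i<n. \<Sum>j<n. cnj (w i) * sign_matrix i j * w j)"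
    using ordered unfolding w_def by (rule abs_Im_sum_eq_sign_form)
  also have "\<dots> \<le> cot (pi / (2 * real n)) * (\<Sum>i<n. (cmod (w i))^2)"
    using sign_form_bound[OF n, of w] by simp
  also have "(\<Sum>i<n. (cmod (w i))^2) = (\<Sum>i<n. (cmod (v i))^2)"
    using sum.reindex_bij_betw[OF \<sigma>, of "\<lambda>i. (cmod (u i))^2"] by (simp add: w_def u_norm)
  finally show ?thesis .
qed

section \<open>The upper bound\<close>

lemma eigenvector_Rayleigh:
  fixes A :: "real mat"
  assumes A: "A \<in> carrier_mat n n" and v: "v \<in> carrier_vec n"
    and eigen: "map_mat complex_of_real A *\<^sub>v v = ev \<cdot>\<^sub>v v"
  shows "ev * complex_of_real (\<Sum>i<n. (cmod (v $ i))^2)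
       = (\<Sum>i<n. \<Sum>j<n. cnj (v $ i) * (complex_of_real (A $$ (i, j)) * v $ j))"
proof -
  have row: "(\<Sum>j<n. complex_of_real (A $$ (i, j)) * v $ j) = ev * v $ i" if "i < n" for i
  proof -
    have "(map_mat complex_of_real A *\<^sub>v v) $ i = ev * v $ i" using eigen v that by simp
    moreover have "(map_mat complex_of_real A *\<^sub>v v) $ i
        = (\<Sum>j<n. complex_of_real (A $$ (i, j)) * v $ j)"
      using that A v by (simp add: scalar_prod_def lessThan_atLeast0)
    ultimately show ?thesis by simp
  qed
  have "ev * complex_of_real (\<Sum>i<n. (cmod (v $ i))^2) = (\<Sum>i<n. cnj (v $ i) * (ev * v $ i))"
    unfolding of_real_sum complex_norm_square by (simp add: sum_distrib_left mult_ac)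
  also have "\<dots> = (\<Sum>i<n. cnj (v $ i) * (\<Sum>j<n. complex_of_real (A $$ (i, j)) * v $ j))"
    by (intro sum.cong refl) (simp add: row)
  finally show ?thesis by (simp only: sum_distrib_left)
qed

lemma weighted_entry_le:
  fixes a c t :: real
  assumes "- c \<le> a" "a \<le> 0"
  shows "a * t \<le> c / 2 * (\<bar>t\<bar> - t)"
proof (cases "t \<ge> 0")
  case True
  then show ?thesis using assms by (simp add: mult_nonpos_nonneg)
next
  case False
  then have "a * t \<le> - c * t" using assms by (intro mult_right_mono_neg) auto
  then show ?thesis using False by simp
qed

text \<open>The oriented areas Im (cnj (x i) * x j) are antisymmetric in i, j, so they sum to 0.\<close>
lemma sum_Im_cnj_pairs:
  "(\<Sum>i<n. \<Sum>j<n. Im (cnj (x i) * x j)) = 0"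
proof -
  have cnj_self: "Im (cnj z * z) = 0" for z :: complex by simp
  have "(\<Sum>i<n. \<Sum>j<n. Im (cnj (x i) * x j)) = Im (cnj (\<Sum>i<n. x i) * (\<Sum>j<n. x j))"
    by (simp add: sum_product cnj_sum Im_sum)
  then show ?thesis unfolding cnj_self .
qed

lemma Im_eigenvalue_le:
  fixes A :: "real mat"
  assumes A: "A \<in> carrier_mat n n" and c: "0 \<le> c"
    and off: "\<And>i j. i < n \<Longrightarrow> j < n \<Longrightarrow> i \<noteq> j \<Longrightarrow> - c \<le> A $$ (i, j) \<and> A $$ (i, j) \<le> 0"
    and ev: "eigenvalue (map_mat complex_of_real A) ev"
  shows "Im ev \<le> c / 2 * cot (pi / (2 * real n))"
proof -
  obtain v where v: "v \<in> carrier_vec n" "v \<noteq> 0\<^sub>v n"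
    and eigen: "map_mat complex_of_real A *\<^sub>v v = ev \<cdot>\<^sub>v v"
    using ev A unfolding eigenvalue_def eigenvector_def by auto
  define x where "x i = v $ i" for i
  define N where "N = (\<Sum>i<n. (cmod (x i))^2)"
  define I where "I i j = Im (cnj (x i) * x j)" for i j
  obtain i0 where i0: "i0 < n" "x i0 \<noteq> 0"
    using v unfolding x_def by (metis eq_vecI carrier_vecD index_zero_vec)
  then have n: "n > 0" by simp
  have "0 < (cmod (x i0))^2" using i0 by simp
  also have "\<dots> \<le> N" unfolding N_def using i0 by (intro member_le_sum) auto
  finally have N_pos: "N > 0" .
  have entry: "A $$ (i, j) * I i j \<le> c / 2 * (\<bar>I i j\<bar> - I i j)" if "i < n" "j < n" for i j
    using off[OF that] weighted_entry_le[of c "A $$ (i, j)" "I i j"] by (cases "i = j") (auto simp: I_def)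
  have antisym: "(\<Sum>i<n. \<Sum>j<n. I i j) = 0"
    unfolding I_def by (rule sum_Im_cnj_pairs)
  have "Im ev * N = (\<Sum>i<n. \<Sum>j<n. Im (cnj (x i) * (complex_of_real (A $$ (i, j)) * x j)))"
    using arg_cong[OF eigenvector_Rayleigh[OF A v(1) eigen], of Im]
    unfolding N_def x_def by (simp add: Im_sum)
  also have "\<dots> = (\<Sum>i<n. \<Sum>j<n. A $$ (i, j) * I i j)"
    unfolding I_def by (simp add: algebra_simps)
  also have "\<dots> \<le> (\<Sum>i<n. \<Sum>j<n. c / 2 * (\<bar>I i j\<bar> - I i j))"
    using entry by (intro sum_mono) auto
  also have "\<dots> = c / 2 * (\<Sum>i<n. \<Sum>j<n. \<bar>I i j\<bar>) - c / 2 * (\<Sum>i<n. \<Sum>j<n. I i j)"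
    by (simp only: sum_distrib_left sum_subtractf right_diff_distrib)
  also have "\<dots> = c / 2 * (\<Sum>i<n. \<Sum>j<n. \<bar>I i j\<bar>)"
    using antisym by simp
  also have "\<dots> \<le> c / 2 * (cot (pi / (2 * real n)) * N)"
    unfolding I_def N_def using c by (intro mult_left_mono sum_abs_Im_le[OF n]) auto
  finally show ?thesis using N_pos by (simp add: mult.assoc)
qed

lemma std_laplacian_Im_eigenvalue_le:
  assumes "std_laplacian n A" and "eigenvalue (map_mat complex_of_real A) ev"
  shows "Im ev \<le> 1 / (2 * real n) * cot (pi / (2 * real n))"
proof -
  have "Im ev \<le> 1 / real n / 2 * cot (pi / (2 * real n))"
    using assms(1) unfolding std_laplacian_def
    by (intro Im_eigenvalue_le[OF _ _ _ assms(2)]) (auto, force simp: abs_le_iff)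
  then show ?thesis by simp
qed

section \<open>Circulant matrices and the extremal Laplacian\<close>

definition circulant :: "nat \<Rightarrow> (nat \<Rightarrow> 'a) \<Rightarrow> 'a mat" where
  "circulant n f = mat n n (\<lambda>(i, j). f ((j + n - i) mod n))"

lemma circulant_index [simp]:
  "i < n \<Longrightarrow> j < n \<Longrightarrow> circulant n f $$ (i, j) = f ((j + n - i) mod n)"
  unfolding circulant_def by simp

lemma circulant_dim [simp]: "dim_row (circulant n f) = n" "dim_col (circulant n f) = n"
  unfolding circulant_def by simp_all

lemma circulant_carrier: "circulant n f \<in> carrier_mat n n"
  unfolding circulant_def by simp

lemma map_mat_circulant: "map_mat g (circulant n f) = circulant n (g \<circ> f)"
  by (rule eq_matI) (auto simp: circulant_def)

lemma offset_rotate: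
  fixes i d n :: nat
  assumes "i < n" "d < n"
  shows "((i + d) mod n + n - i) mod n = d"
proof (cases "i + d < n")
  case True
  then have "(i + d) mod n + n - i = d + n" by simp
  then show ?thesis using assms by simp
next
  case False
  then have "(i + d) mod n + n - i = d" using assms by (simp add: le_mod_geq)
  then show ?thesis using assms by simp
qed

lemma rotate_offset:
  fixes i j n :: nat
  assumes "i < n" "j < n"
  shows "(i + (j + n - i) mod n) mod n = j"
proof (cases "i \<le> j")
  case True
  then have "(j + n - i) mod n = j - i" using assms
    by (metis add.commute add_diff_assoc2 diff_less_Suc less_imp_diff_less mod_add_self2 mod_less)
  then show ?thesis using True assms by simp
next
  case False
  then have "(j + n - i) mod n = j + n - i" using assms by simp
  then show ?thesis using False assms by simp
qed

lemma offset_nonzero: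
  fixes i j n :: nat
  assumes i: "i < n" and j: "j < n" and ij: "i \<noteq> j"
  shows "(j + n - i) mod n \<noteq> 0"
proof
  assume zero: "(j + n - i) mod n = 0"
  have "(i + (j + n - i) mod n) mod n = j" by (rule rotate_offset[OF i j])
  then show False unfolding zero using i ij by simp
qed

lemma sum_rotate:
  fixes g :: "nat \<Rightarrow> 'a::comm_monoid_add"
  assumes "i < n"
  shows "(\<Sum>j<n. g j) = (\<Sum>d<n. g ((i + d) mod n))"
proof -
  have "bij_betw (\<lambda>d. (i + d) mod n) {..<n} {..<n}"
  proof (rule bij_betw_byWitness[where f' = "\<lambda>j. (j + n - i) mod n"])
    show "\<forall>d\<in>{..<n}. ((i + d) mod n + n - i) mod n = d" using offset_rotate[OF assms] by auto
    show "\<forall>j\<in>{..<n}. (i + (j + n - i) mod n) mod n = j" using rotate_offset[OF assms] by auto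
  qed (use assms in auto)
  then show ?thesis by (rule sum.reindex_bij_betw[symmetric])
qed

lemma circulant_row_sum:
  assumes "i < n"
  shows "(\<Sum>j<n. circulant n f $$ (i, j)) = (\<Sum>d<n. f d)"
proof -
  have "(\<Sum>j<n. circulant n f $$ (i, j)) = (\<Sum>j<n. f ((j + n - i) mod n))"
    using assms by (intro sum.cong refl) simp
  also have "\<dots> = (\<Sum>d<n. f d)"
    unfolding sum_rotate[OF assms, of "\<lambda>j. f ((j + n - i) mod n)"]
    by (simp add: offset_rotate[OF assms])
  finally show ?thesis .
qed

lemma circulant_eigenvalue:
  fixes f :: "nat \<Rightarrow> 'a::comm_ring_1"
  assumes n: "n > 0" and root: "\<omega> ^ n = 1"
  shows "eigenvalue (circulant n f) (\<Sum>d<n. f d * \<omega> ^ d)"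
proof -
  define \<mu> where "\<mu> = (\<Sum>d<n. f d * \<omega> ^ d)"
  define v where "v = vec n (\<lambda>j. \<omega> ^ j)"
  have power_mod: "\<omega> ^ m = \<omega> ^ (m mod n)" for m
    by (metis root mult.commute mult_1 mod_mult_div_eq power_add power_mult power_one)
  have "circulant n f *\<^sub>v v = \<mu> \<cdot>\<^sub>v v"
  proof (rule eq_vecI)
    fix i assume "i < dim_vec (\<mu> \<cdot>\<^sub>v v)"
    then have i: "i < n" unfolding v_def by simp
    have "(circulant n f *\<^sub>v v) $ i = (\<Sum>j<n. f ((j + n - i) mod n) * \<omega> ^ j)"
      unfolding v_def circulant_def using i by (simp add: scalar_prod_def lessThan_atLeast0)
    also have "\<dots> = (\<Sum>d<n. f d * \<omega> ^ ((i + d) mod n))"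
      unfolding sum_rotate[OF i, of "\<lambda>j. f ((j + n - i) mod n) * \<omega> ^ j"]
      by (simp add: offset_rotate[OF i])
    also have "\<dots> = \<omega> ^ i * \<mu>"
      unfolding \<mu>_def sum_distrib_left
      by (intro sum.cong refl) (simp add: power_mod[symmetric] power_add mult_ac)
    finally show "(circulant n f *\<^sub>v v) $ i = (\<mu> \<cdot>\<^sub>v v) $ i" unfolding v_def using i by simp
  qed (simp add: v_def)
  moreover have "v \<noteq> 0\<^sub>v n"
  proof
    assume "v = 0\<^sub>v n"
    then have "v $ 0 = 0" using n by simp
    then show False unfolding v_def using n by simp
  qed
  ultimately show ?thesis
    unfolding eigenvalue_def eigenvector_def \<mu>_def by (intro exI[of _ v]) (simp add: v_def)
qed

definition lam_kernel :: "nat \<Rightarrow> nat \<Rightarrow> nat \<Rightarrow> real" where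
  "lam_kernel n k d = (if d = 0 then real k / real n else if d \<le> k then - 1 / real n else 0)"

lemma sum_offsets_range:
  fixes g :: "nat \<Rightarrow> 'a::comm_monoid_add"
  assumes "k < n"
  shows "(\<Sum>d<n. if d = 0 then a else if d \<le> k then g d else 0) = a + (\<Sum>d=1..k. g d)"
proof -
  have "{..<n} = insert 0 ({1..k} \<union> {k<..<n})" "{1..k} \<inter> {k<..<n} = {}"
    using assms by auto
  then show ?thesis by (simp add: sum.union_disjoint)
qed

lemma lam_circulant_std_laplacian:
  assumes "k < n"
  shows "std_laplacian n (circulant n (lam_kernel n k))"
  unfolding std_laplacian_def
proof (intro conjI allI impI)
  fix i assume i: "i < n"
  have "(\<Sum>j<n. circulant n (lam_kernel n k) $$ (i, j)) = (\<Sum>d<n. lam_kernel n k d)"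
    by (rule circulant_row_sum[OF i])
  also have "\<dots> = real k / real n + (\<Sum>d=1..k. - 1 / real n)"
    unfolding lam_kernel_def by (rule sum_offsets_range[OF assms])
  finally show "(\<Sum>j<n. circulant n (lam_kernel n k) $$ (i, j)) = 0" by simp
  fix j assume j: "j < n" and "i \<noteq> j"
  then have "(j + n - i) mod n \<noteq> 0" by (rule offset_nonzero[OF i])
  then show "circulant n (lam_kernel n k) $$ (i, j) \<le> 0"
    and "\<bar>circulant n (lam_kernel n k) $$ (i, j)\<bar> \<le> 1 / real n"
    using i j by (auto simp: lam_kernel_def)
qed (rule circulant_carrier)

lemma exp_root_of_unity:
  "exp (- 2 * pi * \<i> * of_nat j / of_nat n) = cis (- (2 * pi / real n)) ^ j"
proof -
  have "exp (- 2 * pi * \<i> * of_nat j / of_nat n) = cis (real j * (- (2 * pi / real n)))"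
    unfolding cis_conv_exp by (rule arg_cong[where f = exp]) (simp add: field_simps)
  then show ?thesis unfolding DeMoivre .
qed

lemma lam_as_symbol:
  assumes "k < n"
  shows "(\<Sum>d<n. complex_of_real (lam_kernel n k d) * cis (- (2 * pi / real n)) ^ d) = lam n k"
proof -
  have "(\<Sum>d<n. complex_of_real (lam_kernel n k d) * cis (- (2 * pi / real n)) ^ d)
      = of_real (real k / real n) + (\<Sum>d=1..k. - (cis (- (2 * pi / real n)) ^ d) / of_nat n)"
    unfolding sum_offsets_range[OF assms, symmetric] lam_kernel_def
    by (intro sum.cong refl) auto
  also have "\<dots> = lam n k"
    unfolding lam_def exp_root_of_unity using assms
    by (simp add: sum_negf sum_divide_distrib[symmetric] field_simps)
  finally show ?thesis .
qed

lemma lam_attained: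
  assumes "k < n"
  shows "std_laplacian n (circulant n (lam_kernel n k))
    \<and> eigenvalue (map_mat complex_of_real (circulant n (lam_kernel n k))) (lam n k)"
proof -
  have "cis (- (2 * pi / real n)) ^ n = cis (- (2 * pi))"
    unfolding DeMoivre using assms by simp
  then have "cis (- (2 * pi / real n)) ^ n = 1" by (simp add: cis_cnj[symmetric])
  then have "eigenvalue (circulant n (complex_of_real \<circ> lam_kernel n k)) (lam n k)"
    using circulant_eigenvalue[of n _ "complex_of_real \<circ> lam_kernel n k"] assms lam_as_symbol
    by fastforce
  then show ?thesis using lam_circulant_std_laplacian[OF assms] by (simp add: map_mat_circulant)
qed

lemma Im_lam:
  "Im (lam n k) = (\<Sum>j=1..k. sin (real j * (2 * pi / real n))) / real n"
  unfolding lam_def exp_root_of_unity DeMoivre by (simp add: Im_sum sum_negf)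

lemma Im_lam_half_period:
  assumes "n = 2 * k + 1"
  shows "Im (lam n k) = 1 / (2 * real n) * cot (pi / (2 * real n))"
  unfolding Im_lam sin_sum_half_period[OF assms] by simp

theorem theorem10:
  fixes n :: nat
  assumes "odd n" and "n \<ge> 3"
  shows "h n = 1 / (2 * real n) * cot (pi / (2 * real n))
         \<and> h n = Im (lam n ((n - 1) div 2))"
proof -
  define k where "k = (n - 1) div 2"
  have n: "n = 2 * k + 1" "k < n" unfolding k_def using assms by (auto elim: oddE)
  define S where
    "S = {Im ev | ev A. std_laplacian n A \<and> eigenvalue (map_mat complex_of_real A) ev}"
  have "Im (lam n k) \<in> S" unfolding S_def using lam_attained[OF n(2)] by blast
  moreover have "x \<le> Im (lam n k)" if "x \<in> S" for x
    using that std_laplacian_Im_eigenvalue_le unfolding S_def Im_lam_half_period[OF n(1)] by blast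
  ultimately have "h n = Im (lam n k)" unfolding h_def S_def[symmetric] by (rule cSup_eq_maximum)
  then show ?thesis using Im_lam_half_period[OF n(1)] unfolding k_def by simp
qed

end
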